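(* Let $n,d\ge1$ be integers and let $A$ be a non-empty subset of $]n[=\{1,\dots,n\}$. If $s_A(\mathbb{Z}_n^d)=d_A(\mathbb{Z}_n^d)+n-1$, then $ZS_A(\mathbb{Z}_n^d)=d_A(\mathbb{Z}_n^d)+n^d-1$.
   Context: For an integer $x\ge1$, $]x[=\{1,2,\dots,x\}$. Let $G$ be a finite abelian group (written additively) of exponent $n$ and let $\emptyset\ne A\subseteq\,]n[$. The constant $d_A(G)$ is the least positive integer $t$ such that for every sequence $g_1,\dots,g_t$ in $G$ there exist $\ell\ge1$, indices $1\le i_1<\dots<i_\ell\le t$ and $a_1,\dots,a_\ell\in A$ (repetitions allowed) with $\sum_{j=1}^{\ell}a_jg_{i_j}=0$. The constant $ZS_A(G)$ (resp. $s_A(G)$) is the least positive integer $t$ such that every sequence $g_1,\dots,g_t$ in $G$ has a subsequence $g_{i_1},\dots,g_{i_m}$ ($i_1<\dots<i_m$) with $m=|G|$ (resp. $m=n$) and elements $a_1,\dots,a_m\in A$ (repetitions allowed) with $\sum_{j=1}^m a_jg_{i_j}=0$ in $G$. *)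

theory Defs
  imports "HOL-Number_Theory.Cong"
begin

text \<open>Elements of Z_n^d are represented by vectors v :: nat => int whose coordinates
  v i (i < d) lie in {0..<n}; group addition is coordinatewise modulo n.
  A sequence of length t in Z_n^d is g :: nat => nat => int, with g j the j-th term (j < t).\<close>

definition in_Znd :: "nat \<Rightarrow> nat \<Rightarrow> (nat \<Rightarrow> int) \<Rightarrow> bool" where
  "in_Znd n d v \<longleftrightarrow> (\<forall>i<d. 0 \<le> v i \<and> v i < int n)"

definition A_zero_sum :: "nat \<Rightarrow> nat \<Rightarrow> int set \<Rightarrow> (nat \<Rightarrow> nat \<Rightarrow> int) \<Rightarrow> nat set \<Rightarrow> bool" where
  "A_zero_sum n d A g I \<longleftrightarrow>
     (\<exists>a :: nat \<Rightarrow> int. (\<forall>j\<in>I. a j \<in> A) \<and>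
        (\<forall>i<d. [(\<Sum>j\<in>I. a j * g j i) = 0] (mod int n)))"

definition seq_Znd :: "nat \<Rightarrow> nat \<Rightarrow> nat \<Rightarrow> (nat \<Rightarrow> nat \<Rightarrow> int) \<Rightarrow> bool" where
  "seq_Znd n d t g \<longleftrightarrow> (\<forall>j<t. in_Znd n d (g j))"

definition dA :: "nat \<Rightarrow> nat \<Rightarrow> int set \<Rightarrow> nat" where
  "dA n d A = (LEAST t. t \<ge> 1 \<and> (\<forall>g. seq_Znd n d t g \<longrightarrow>
      (\<exists>I. I \<subseteq> {..<t} \<and> I \<noteq> {} \<and> A_zero_sum n d A g I)))"

text \<open>s_A(Z_n^d): zero sums of length n (n = exponent of Z_n^d)\<close>
definition sA :: "nat \<Rightarrow> nat \<Rightarrow> int set \<Rightarrow> nat" where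
  "sA n d A = (LEAST t. t \<ge> 1 \<and> (\<forall>g. seq_Znd n d t g \<longrightarrow>
      (\<exists>I. I \<subseteq> {..<t} \<and> card I = n \<and> A_zero_sum n d A g I)))"

text \<open>ZS_A(Z_n^d): zero sums of length |Z_n^d| = n^d\<close>
definition ZSA :: "nat \<Rightarrow> nat \<Rightarrow> int set \<Rightarrow> nat" where
  "ZSA n d A = (LEAST t. t \<ge> 1 \<and> (\<forall>g. seq_Znd n d t g \<longrightarrow>
      (\<exists>I. I \<subseteq> {..<t} \<and> card I = n ^ d \<and> A_zero_sum n d A g I)))"

end

theory Submission
  imports Defs "HOL-Library.FuncSet"
begin

text \<open>Put D = d_A(Z_n^d) and N = n^d. Padding an extremal zero-sum free sequence of length D - 1
  with N - 1 zeros gives a sequence with no A-weighted zero sum of length N, so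
  ZS_A \<ge> D + N - 1. Conversely, the hypothesis says that every D + n - 1 terms contain an
  A-weighted zero sum of length n; removing such blocks one at a time from D + N - 1 terms leaves
  at least D + n - 1 terms until N/n disjoint blocks have been collected, and their union is an
  A-weighted zero sum of length N.\<close>

definition forces_zero_sum :: "nat \<Rightarrow> nat \<Rightarrow> int set \<Rightarrow> nat \<Rightarrow> nat \<Rightarrow> bool" where
  "forces_zero_sum n d A m t \<longleftrightarrow> (\<forall>g. seq_Znd n d t g \<longrightarrow>
      (\<exists>I. I \<subseteq> {..<t} \<and> card I = m \<and> A_zero_sum n d A g I))"

lemma A_zero_sum_cong:
  assumes "\<forall>j\<in>I. \<forall>i<d. g j i = h j i"
  shows "A_zero_sum n d A g I \<longleftrightarrow> A_zero_sum n d A h I"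
proof -
  have "(\<Sum>j\<in>I. a j * g j i) = (\<Sum>j\<in>I. a j * h j i)" if "i < d" for a i
    using assms that by (intro sum.cong) auto
  then show ?thesis
    unfolding A_zero_sum_def by simp
qed

lemma A_zero_sum_image:
  assumes "inj_on f I" and "A_zero_sum n d A (g \<circ> f) I"
  shows "A_zero_sum n d A g (f ` I)"
proof -
  obtain a where a: "\<forall>j\<in>I. a j \<in> A" "\<forall>i<d. [(\<Sum>j\<in>I. a j * g (f j) i) = 0] (mod int n)"
    using assms(2) unfolding A_zero_sum_def by auto
  define b where "b = a \<circ> inv_into I f"
  have b: "b (f j) = a j" if "j \<in> I" for j
    using assms(1) that by (simp add: b_def)
  have "(\<Sum>j\<in>f ` I. b j * g j i) = (\<Sum>j\<in>I. a j * g (f j) i)" for i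
    using assms(1) b by (simp add: sum.reindex)
  moreover have "\<forall>j\<in>f ` I. b j \<in> A"
    using a(1) b by auto
  ultimately show ?thesis
    unfolding A_zero_sum_def using a(2) by metis
qed

lemma A_zero_sum_Un:
  assumes "finite I" "finite J" "I \<inter> J = {}"
    and "A_zero_sum n d A g I" "A_zero_sum n d A g J"
  shows "A_zero_sum n d A g (I \<union> J)"
proof -
  obtain a where a: "\<forall>j\<in>I. a j \<in> A" "\<forall>i<d. [(\<Sum>j\<in>I. a j * g j i) = 0] (mod int n)"
    using assms(4) unfolding A_zero_sum_def by blast
  obtain b where b: "\<forall>j\<in>J. b j \<in> A" "\<forall>i<d. [(\<Sum>j\<in>J. b j * g j i) = 0] (mod int n)"
    using assms(5) unfolding A_zero_sum_def by blast
  define c where "c j = (if j \<in> I then a j else b j)" for j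
  show ?thesis
    unfolding A_zero_sum_def
  proof (intro exI[of _ c] conjI ballI allI impI)
    fix j assume "j \<in> I \<union> J"
    then show "c j \<in> A" using a(1) b(1) by (auto simp: c_def)
  next
    fix i assume "i < d"
    have "(\<Sum>j\<in>I \<union> J. c j * g j i) = (\<Sum>j\<in>I. c j * g j i) + (\<Sum>j\<in>J. c j * g j i)"
      by (rule sum.union_disjoint[OF assms(1-3)])
    also have "(\<Sum>j\<in>I. c j * g j i) = (\<Sum>j\<in>I. a j * g j i)"
      by (rule sum.cong) (auto simp: c_def)
    also have "(\<Sum>j\<in>J. c j * g j i) = (\<Sum>j\<in>J. b j * g j i)"
      using assms(3) by (intro sum.cong) (auto simp: c_def)
    finally show "[(\<Sum>j\<in>I \<union> J. c j * g j i) = 0] (mod int n)"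
      using cong_add[OF a(2)[rule_format, OF \<open>i < d\<close>] b(2)[rule_format, OF \<open>i < d\<close>]] by simp
  qed
qed

lemma A_zero_sum_Int_if_zero_outside:
  assumes "finite I" and "\<forall>j\<in>I - K. \<forall>i<d. g j i = 0" and "A_zero_sum n d A g I"
  shows "A_zero_sum n d A g (I \<inter> K)"
proof -
  obtain a where a: "\<forall>j\<in>I. a j \<in> A" "\<forall>i<d. [(\<Sum>j\<in>I. a j * g j i) = 0] (mod int n)"
    using assms(3) unfolding A_zero_sum_def by blast
  have "(\<Sum>j\<in>I \<inter> K. a j * g j i) = (\<Sum>j\<in>I. a j * g j i)" if "i < d" for i
    using assms(1,2) that by (intro sum.mono_neutral_left) auto
  then show ?thesis
    unfolding A_zero_sum_def using a by (intro exI[of _ a]) simp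
qed

lemma A_zero_sum_repeated:
  assumes "a0 \<in> A" and "card I = n" and "\<forall>j\<in>I. \<forall>i<d. g j i = v i"
  shows "A_zero_sum n d A g I"
  unfolding A_zero_sum_def
proof (intro exI[of _ "\<lambda>_. a0"] conjI ballI allI impI)
  fix i assume "i < d"
  then have "(\<Sum>j\<in>I. a0 * g j i) = int n * (a0 * v i)"
    using assms(2,3) by simp
  then show "[(\<Sum>j\<in>I. a0 * g j i) = 0] (mod int n)"
    by (simp add: cong_0_iff)
qed (use assms(1) in simp)

lemma forces_zero_sum_on_set:
  assumes "forces_zero_sum n d A m t" and "finite J" "t \<le> card J"
    and "\<forall>j\<in>J. in_Znd n d (g j)"
  shows "\<exists>I\<subseteq>J. card I = m \<and> A_zero_sum n d A g I"
proof -
  obtain f where f: "bij_betw f {..<card J} J"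
    using ex_bij_betw_nat_finite[OF assms(2)] by (auto simp: atLeast0LessThan)
  have "f j \<in> J" if "j < t" for j
    using bij_betwE[OF f] that assms(3) by simp
  then have "seq_Znd n d t (g \<circ> f)"
    using assms(4) by (simp add: seq_Znd_def)
  then obtain I where I: "I \<subseteq> {..<t}" "card I = m" "A_zero_sum n d A (g \<circ> f) I"
    using assms(1) unfolding forces_zero_sum_def by blast
  have "I \<subseteq> {..<card J}" using I(1) assms(3) by auto
  then have inj: "inj_on f I" and "f ` I \<subseteq> J"
    using f unfolding bij_betw_def by (blast intro: inj_on_subset)+
  then show ?thesis
    using A_zero_sum_image[OF inj I(3)] card_image[OF inj] I(2) by blast
qed

lemma forces_zero_sum_disjoint_blocks:
  assumes "forces_zero_sum n d A m t" and "finite J" "t + k * m \<le> card J"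
    and "\<forall>j\<in>J. in_Znd n d (g j)"
  shows "\<exists>I\<subseteq>J. card I = (k + 1) * m \<and> A_zero_sum n d A g I"
  using assms(2-4)
proof (induction k arbitrary: J)
  case 0
  then show ?case using forces_zero_sum_on_set[OF assms(1)] by simp
next
  case (Suc k)
  obtain I where I: "I \<subseteq> J" "card I = m" "A_zero_sum n d A g I"
    using forces_zero_sum_on_set[OF assms(1) Suc.prems(1) _ Suc.prems(3)] Suc.prems(2) by auto
  have "finite I" using I(1) Suc.prems(1) finite_subset by blast
  then have "t + k * m \<le> card (J - I)"
    using I(1,2) Suc.prems(2) by (simp add: card_Diff_subset)
  then obtain I' where I': "I' \<subseteq> J - I" "card I' = (k + 1) * m" "A_zero_sum n d A g I'"
    using Suc.IH[of "J - I"] Suc.prems(1,3) by blast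
  have "finite I'" using I'(1) Suc.prems(1) finite_subset by blast
  have "I \<inter> I' = {}" using I'(1) by blast
  have "A_zero_sum n d A g (I \<union> I')"
    using A_zero_sum_Un[OF \<open>finite I\<close> \<open>finite I'\<close> \<open>I \<inter> I' = {}\<close> I(3) I'(3)] .
  moreover have "card (I \<union> I') = (Suc k + 1) * m"
    using card_Un_disjoint[OF \<open>finite I\<close> \<open>finite I'\<close> \<open>I \<inter> I' = {}\<close>] I(2) I'(2) by simp
  ultimately show ?case using I(1) I'(1) by blast
qed

lemma forces_zero_sum_mult:
  assumes "forces_zero_sum n d A m t"
  shows "forces_zero_sum n d A ((k + 1) * m) (t + k * m)"
  unfolding forces_zero_sum_def
proof (intro allI impI)
  fix g assume "seq_Znd n d (t + k * m) g"
  then show "\<exists>I. I \<subseteq> {..<t + k * m} \<and> card I = (k + 1) * m \<and> A_zero_sum n d A g I"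
    using forces_zero_sum_disjoint_blocks[OF assms, of "{..<t + k * m}" k g]
    by (auto simp: seq_Znd_def)
qed

text \<open>Among n^d * n terms of Z_n^d some n are equal (pigeonhole).\<close>
lemma forces_zero_sum_exists:
  assumes "n \<ge> 1" and "a0 \<in> A"
  shows "\<exists>t\<ge>1. forces_zero_sum n d A n t"
proof -
  define V where "V = {..<d} \<rightarrow>\<^sub>E {0..<int n}"
  have "finite V" and card_V: "card V = n ^ d"
    by (simp_all add: V_def finite_PiE card_funcsetE)
  have "forces_zero_sum n d A n (card V * n)"
    unfolding forces_zero_sum_def
  proof (intro allI impI)
    fix g assume g: "seq_Znd n d (card V * n) g"
    define f where "f j = restrict (g j) {..<d}" for j
    have "f j \<in> V" if "in_Znd n d (g j)" for j
      using that unfolding in_Znd_def by (simp add: f_def V_def PiE_iff)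
    then have f: "f \<in> {..<card V * n} \<rightarrow> V"
      using g unfolding seq_Znd_def by simp
    have "V \<noteq> {}"
      using card_V assms(1) by auto
    then obtain v where v: "card (f -` {v} \<inter> {..<card V * n}) * card V \<ge> card V * n"
      using pigeonhole_card[OF f finite_lessThan \<open>finite V\<close>] unfolding card_lessThan by blast
    have "0 < card V"
      using card_V assms(1) by simp
    then have "n \<le> card (f -` {v} \<inter> {..<card V * n})"
      using v by (simp add: mult.commute[of "card V" n])
    then obtain I where I: "I \<subseteq> f -` {v} \<inter> {..<card V * n}" "card I = n"
      by (meson obtain_subset_with_card_n)
    have "\<forall>j\<in>I. \<forall>i<d. g j i = v i"
    proof (intro ballI allI impI)
      fix j i assume "j \<in> I" "i < d"
      then have "f j i = v i" using I(1) by auto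
      then show "g j i = v i" using \<open>i < d\<close> by (simp add: f_def)
    qed
    then have "A_zero_sum n d A g I"
      by (rule A_zero_sum_repeated[OF assms(2) I(2)])
    then show "\<exists>I. I \<subseteq> {..<card V * n} \<and> card I = n \<and> A_zero_sum n d A g I"
      using I by blast
  qed
  then show ?thesis
    using card_V assms(1) by (intro exI[of _ "card V * n"]) simp
qed

lemma sA_forces_zero_sum:
  assumes "n \<ge> 1" and "A \<noteq> {}"
  shows "forces_zero_sum n d A n (sA n d A)"
proof -
  have "sA n d A = (LEAST t. t \<ge> 1 \<and> forces_zero_sum n d A n t)"
    unfolding sA_def forces_zero_sum_def ..
  then show ?thesis
    using LeastI_ex[OF forces_zero_sum_exists[OF assms(1)]] assms(2) by auto
qed

lemma dA_ge_1_and_zero_sum_free_sequence: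
  assumes "n \<ge> 1" and "A \<noteq> {}"
  shows "dA n d A \<ge> 1"
    and "\<exists>h. seq_Znd n d (dA n d A - 1) h \<and>
           (\<forall>I\<subseteq>{..<dA n d A - 1}. I \<noteq> {} \<longrightarrow> \<not> A_zero_sum n d A h I)"
proof -
  define P where "P t \<longleftrightarrow> t \<ge> 1 \<and> (\<forall>g. seq_Znd n d t g \<longrightarrow>
      (\<exists>I. I \<subseteq> {..<t} \<and> I \<noteq> {} \<and> A_zero_sum n d A g I))" for t
  have dA: "dA n d A = (LEAST t. P t)" unfolding dA_def P_def ..
  obtain t where "t \<ge> 1" and t: "forces_zero_sum n d A n t"
    using forces_zero_sum_exists[OF assms(1)] assms(2) by blast
  have "P t"
    unfolding P_def
  proof (intro conjI allI impI)
    fix g assume "seq_Znd n d t g"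
    then obtain I where "I \<subseteq> {..<t}" "card I = n" "A_zero_sum n d A g I"
      using t unfolding forces_zero_sum_def by blast
    moreover have "I \<noteq> {}" using \<open>card I = n\<close> assms(1) by auto
    ultimately show "\<exists>I. I \<subseteq> {..<t} \<and> I \<noteq> {} \<and> A_zero_sum n d A g I" by blast
  qed fact
  then have "P (dA n d A)"
    unfolding dA by (rule LeastI)
  then show "dA n d A \<ge> 1"
    unfolding P_def by blast
  show "\<exists>h. seq_Znd n d (dA n d A - 1) h \<and>
           (\<forall>I\<subseteq>{..<dA n d A - 1}. I \<noteq> {} \<longrightarrow> \<not> A_zero_sum n d A h I)"
  proof (cases "dA n d A - 1 = 0")
    case True
    then show ?thesis by (auto simp: seq_Znd_def)
  next
    case False
    then have "1 \<le> dA n d A - 1" by simp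
    moreover have "\<not> P (dA n d A - 1)"
      using not_less_Least[of "dA n d A - 1" P] False dA by simp
    ultimately show ?thesis unfolding P_def by blast
  qed
qed

text \<open>Padding h with zeros: a zero sum of length m among the first t terms must meet h.\<close>
lemma forces_zero_sum_length_lower_bound:
  assumes "n \<ge> 1" and "m \<ge> 1" and "forces_zero_sum n d A m t"
    and "seq_Znd n d b h" and "\<forall>I\<subseteq>{..<b}. I \<noteq> {} \<longrightarrow> \<not> A_zero_sum n d A h I"
  shows "b + m \<le> t"
proof (rule ccontr)
  assume "\<not> b + m \<le> t"
  define g where "g j = (if j < b then h j else (\<lambda>_. 0))" for j
  have "seq_Znd n d t g"
    using assms(1,4) by (auto simp: seq_Znd_def in_Znd_def g_def)
  then obtain I where I: "I \<subseteq> {..<t}" "card I = m" "A_zero_sum n d A g I"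
    using assms(3) unfolding forces_zero_sum_def by blast
  have "finite I" using I(1) finite_subset by blast
  have "I \<inter> {..<b} \<noteq> {}"
  proof
    assume "I \<inter> {..<b} = {}"
    then have "I \<subseteq> {..<t} - {..<b}" using I(1) by blast
    also have "\<dots> = {b..<t}" by auto
    finally
    have "card I \<le> t - b" using card_mono[of "{b..<t}" I] by simp
    then show False using I(2) \<open>\<not> b + m \<le> t\<close> assms(2) by simp
  qed
  moreover have "A_zero_sum n d A h (I \<inter> {..<b})"
  proof -
    have zero: "\<forall>j\<in>I - {..<b}. \<forall>i<d. g j i = 0" and agree: "\<forall>j\<in>I \<inter> {..<b}. \<forall>i<d. g j i = h j i"
      by (simp_all add: g_def)
    show ?thesis
      using A_zero_sum_Int_if_zero_outside[OF \<open>finite I\<close> zero I(3)] A_zero_sum_cong[OF agree] by simp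
  qed
  ultimately show False using assms(5)[rule_format, OF Int_lower2] by blast
qed

theorem lemma3p1:
  fixes n d :: nat and A :: "int set"
  assumes "n \<ge> 1" and "d \<ge> 1"
    and "A \<noteq> {}" and "A \<subseteq> {1..int n}"
    and "sA n d A = dA n d A + n - 1"
  shows "ZSA n d A = dA n d A + n ^ d - 1"
proof -
  define D N k where "D = dA n d A" and "N = n ^ d" and "k = n ^ (d - 1) - 1"
  have "D \<ge> 1"
    unfolding D_def by (rule dA_ge_1_and_zero_sum_free_sequence(1)[OF assms(1,3)])
  obtain h where h: "seq_Znd n d (D - 1) h"
    "\<forall>I\<subseteq>{..<D - 1}. I \<noteq> {} \<longrightarrow> \<not> A_zero_sum n d A h I"
    using dA_ge_1_and_zero_sum_free_sequence(2)[OF assms(1,3)] unfolding D_def by blast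
  have "k + 1 = n ^ (d - 1)"
    using assms(1) unfolding k_def by simp
  moreover have "N = n ^ (d - 1) * n"
    using assms(2) unfolding N_def by (cases d) (simp_all add: power_Suc2)
  ultimately have N: "N = (k + 1) * n"
    by simp
  have "forces_zero_sum n d A n (D + n - 1)"
    using sA_forces_zero_sum[OF assms(1,3), where d=d] assms(5) unfolding D_def by simp
  then have "forces_zero_sum n d A ((k + 1) * n) (D + n - 1 + k * n)"
    by (rule forces_zero_sum_mult)
  moreover have "D + n - 1 + k * n = D + N - 1"
    using N \<open>D \<ge> 1\<close> by (simp add: algebra_simps)
  ultimately have upper: "forces_zero_sum n d A N (D + N - 1)"
    using N by simp
  have lower: "D + N - 1 \<le> t" if "forces_zero_sum n d A N t" for t
    using forces_zero_sum_length_lower_bound[OF assms(1) _ that h] N assms(1) \<open>D \<ge> 1\<close> by simp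
  have "ZSA n d A = (LEAST t. t \<ge> 1 \<and> forces_zero_sum n d A N t)"
    unfolding ZSA_def forces_zero_sum_def N_def ..
  also have "\<dots> = D + N - 1"
  proof (rule Least_equality)
    show "1 \<le> D + N - 1 \<and> forces_zero_sum n d A N (D + N - 1)"
      using upper N assms(1) \<open>D \<ge> 1\<close> by simp
  qed (use lower in blast)
  finally show ?thesis
    unfolding D_def N_def .
qed

end
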